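(* Let $(I_n)_{n\ge1}$ be pairwise disjoint intervals in $\mathcal{R}$ with $\lim_{n\to\infty}l(I_n)=0$, and let $A,B\subseteq\mathcal{R}$ be outer measurable with $A\subseteq\bigcup_{n=1}^\infty I_n$ and $B\subseteq\mathcal{R}\setminus\bigcup_{n=1}^\infty I_n$. Then $A\cup B$ is outer measurable and $M_u(A\cup B)=M_u(A)+M_u(B)$.
   Context: $\mathcal{R}$ denotes the Levi-Civita field: functions $x:\mathbb{Q}\to\mathbb{R}$ with left-finite support, with componentwise addition and formal power series multiplication, ordered by $x>0$ iff $x\ne0$ and $x[\min\operatorname{supp}x]>0$; it is a non-Archimedean ordered field extension of $\mathbb{R}$, Cauchy complete in the order topology, in which all limits and series are taken (a series $\sum a_n$ converges iff $a_n\to0$). An interval is a set $[a,b],[a,b),(a,b]$ or $(a,b)$ with $a<b$ in $\mathcal{R}$, of length $l=b-a$. A cover of $A\subseteq\mathcal{R}$ is a sequence of intervals $(S_n)_{n\ge1}$ with $A\subseteq\bigcup_n S_n$ and $\sum_n l(S_n)$ convergent in $\mathcal{R}$. $A$ is called outer measurable if the infimum $\inf\{\sum_n l(S_n): (S_n)\text{ a cover of }A\}$ exists in $\mathcal{R}$; this infimum is then called the outer measure $M_u(A)$. *)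

theory Defs
  imports Complex_Main
begin

section \<open>The Levi-Civita field (carrier and the operations used)\<close>

typedef lc = "{x :: rat \<Rightarrow> real. \<forall>q. finite {p. p < q \<and> x p \<noteq> 0}}"
  by (rule exI[of _ "\<lambda>_. 0"]) auto

instantiation lc :: "{zero, plus, uminus, minus, times}"
begin
definition zero_lc_def: "0 = Abs_lc (\<lambda>_. 0)"
definition plus_lc_def: "x + y = Abs_lc (\<lambda>q. Rep_lc x q + Rep_lc y q)"
definition uminus_lc_def: "- x = Abs_lc (\<lambda>q. - Rep_lc x q)"
definition minus_lc_def: "x - y = Abs_lc (\<lambda>q. Rep_lc x q - Rep_lc y q)"
definition times_lc_def: "x * y = Abs_lc (\<lambda>q.
   \<Sum>p\<in>{p. Rep_lc x p \<noteq> 0 \<and> Rep_lc y (q - p) \<noteq> 0}. Rep_lc x p * Rep_lc y (q - p))"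
instance ..
end

definition lc_pos :: "lc \<Rightarrow> bool" where
  "lc_pos x \<longleftrightarrow> x \<noteq> 0 \<and> (\<exists>q. Rep_lc x q > 0 \<and> (\<forall>p<q. Rep_lc x p = 0))"

instantiation lc :: ord
begin
definition less_lc_def: "x < y \<longleftrightarrow> lc_pos (y - x)"
definition less_eq_lc_def: "x \<le> (y::lc) \<longleftrightarrow> x = y \<or> x < y"
instance ..
end

definition lc_tendsto :: "(nat \<Rightarrow> lc) \<Rightarrow> lc \<Rightarrow> bool" where
  "lc_tendsto f L \<longleftrightarrow> (\<forall>a b. a < L \<and> L < b \<longrightarrow> (\<exists>N. \<forall>n\<ge>N. a < f n \<and> f n < b))"

primrec lc_psum :: "(nat \<Rightarrow> lc) \<Rightarrow> nat \<Rightarrow> lc" where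
  "lc_psum a 0 = 0"
| "lc_psum a (Suc n) = lc_psum a n + a n"

definition lc_sums :: "(nat \<Rightarrow> lc) \<Rightarrow> lc \<Rightarrow> bool" where
  "lc_sums a s \<longleftrightarrow> lc_tendsto (lc_psum a) s"

definition lc_interval :: "lc \<Rightarrow> lc \<Rightarrow> lc set \<Rightarrow> bool" where
  "lc_interval a b S \<longleftrightarrow> a < b \<and>
     (S = {x. a \<le> x \<and> x \<le> b} \<or> S = {x. a \<le> x \<and> x < b} \<or>
      S = {x. a < x \<and> x \<le> b} \<or> S = {x. a < x \<and> x < b})"

definition is_lc_interval :: "lc set \<Rightarrow> bool" where
  "is_lc_interval S \<longleftrightarrow> (\<exists>a b. lc_interval a b S)"

definition lc_len :: "lc set \<Rightarrow> lc" where
  "lc_len S = (THE l. \<exists>a b. lc_interval a b S \<and> l = b - a)"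

text \<open>Covers are indexed by nat (starting at 0 instead of 1).\<close>
definition lc_cover :: "lc set \<Rightarrow> (nat \<Rightarrow> lc set) \<Rightarrow> bool" where
  "lc_cover A S \<longleftrightarrow> (\<forall>n. is_lc_interval (S n)) \<and> A \<subseteq> (\<Union>n. S n) \<and>
     (\<exists>s. lc_sums (\<lambda>n. lc_len (S n)) s)"

definition cover_sums :: "lc set \<Rightarrow> lc set" where
  "cover_sums A = {s. \<exists>S. lc_cover A S \<and> lc_sums (\<lambda>n. lc_len (S n)) s}"

definition lc_is_inf :: "lc set \<Rightarrow> lc \<Rightarrow> bool" where
  "lc_is_inf X m \<longleftrightarrow> (\<forall>x\<in>X. m \<le> x) \<and> (\<forall>m'. (\<forall>x\<in>X. m' \<le> x) \<longrightarrow> m' \<le> m)"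

definition outer_measurable :: "lc set \<Rightarrow> bool" where
  "outer_measurable A \<longleftrightarrow> (\<exists>m. lc_is_inf (cover_sums A) m)"

definition Mu :: "lc set \<Rightarrow> lc" where
  "Mu A = (THE m. lc_is_inf (cover_sums A) m)"

end

theory Submission
  imports Defs "HOL-Library.Nat_Bijection" "HOL-Library.Countable_Set"
begin

text \<open>
  Take any cover \<open>S\<close> of \<open>A \<union> B\<close>. The overlaps \<open>S k \<inter> I n\<close> cover \<open>A\<close>, so \<open>Mu A\<close> is at
  most the sum \<open>T\<close> of their lengths. Deleting the first \<open>N\<close> intervals \<open>I n\<close> from every \<open>S k\<close>
  leaves finitely many segments per \<open>k\<close> that cover \<open>B\<close>, so \<open>Mu B\<close> is at most the length of the
  cover minus the part \<open>G N\<close> of \<open>T\<close> coming from those \<open>N\<close> intervals. Because the lengths of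
  the \<open>I n\<close> tend to \<open>0\<close>, the overlap lengths form a summable family, so \<open>G N\<close> tends to \<open>T\<close>
  and \<open>Mu A + Mu B\<close> is at most the length of the cover. Conversely, interleaving covers of
  \<open>A\<close> and of \<open>B\<close> gives covers of \<open>A \<union> B\<close>.
\<close>

definition left_finite :: "(rat \<Rightarrow> real) \<Rightarrow> bool" where
  "left_finite f \<longleftrightarrow> (\<forall>q. finite {p. p < q \<and> f p \<noteq> 0})"

lemma left_finite_Rep_lc: "left_finite (Rep_lc x)"
  using Rep_lc[of x] by (simp add: left_finite_def)

lemma Rep_lc_Abs_lc: "left_finite f \<Longrightarrow> Rep_lc (Abs_lc f) = f"
  by (simp add: Abs_lc_inverse left_finite_def)

lemma left_finite_supp_subset:
  assumes "left_finite f" "left_finite g" "\<And>q. h q \<noteq> 0 \<Longrightarrow> f q \<noteq> 0 \<or> g q \<noteq> 0"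
  shows "left_finite h"
  unfolding left_finite_def
proof
  fix q
  have "finite ({p. p < q \<and> f p \<noteq> 0} \<union> {p. p < q \<and> g p \<noteq> 0})"
    using assms(1,2) by (simp add: left_finite_def)
  then show "finite {p. p < q \<and> h p \<noteq> 0}"
    by (rule finite_subset[rotated]) (use assms(3) in auto)
qed

lemma left_finite_Rep_lc_pointwise:
  "(\<And>q. Rep_lc x q = 0 \<Longrightarrow> Rep_lc y q = 0 \<Longrightarrow> h q = 0) \<Longrightarrow> left_finite h"
  by (rule left_finite_supp_subset[OF left_finite_Rep_lc left_finite_Rep_lc]) blast

lemma Rep_lc_zero [simp]: "Rep_lc 0 q = 0"
  by (simp add: zero_lc_def Rep_lc_Abs_lc left_finite_def)

lemma Rep_lc_plus [simp]: "Rep_lc (x + y) q = Rep_lc x q + Rep_lc y q"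
  unfolding plus_lc_def by (subst Rep_lc_Abs_lc) (rule left_finite_Rep_lc_pointwise[of x y], auto)

lemma Rep_lc_uminus [simp]: "Rep_lc (- x) q = - Rep_lc x q"
  unfolding uminus_lc_def by (subst Rep_lc_Abs_lc) (rule left_finite_Rep_lc_pointwise[of x x], auto)

lemma Rep_lc_minus [simp]: "Rep_lc (x - y) q = Rep_lc x q - Rep_lc y q"
  unfolding minus_lc_def by (subst Rep_lc_Abs_lc) (rule left_finite_Rep_lc_pointwise[of x y], auto)

lemma lc_eqI: "(\<And>q. Rep_lc x q = Rep_lc y q) \<Longrightarrow> x = y"
  by (metis Rep_lc_inject ext)

instance lc :: ab_group_add
  by standard (rule lc_eqI, simp)+

lemma Rep_lc_sum: "Rep_lc (sum f F) q = (\<Sum>i\<in>F. Rep_lc (f i) q)"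
  by (induction F rule: infinite_finite_induct) auto

section \<open>The order\<close>

definition vanishes_below :: "lc \<Rightarrow> rat \<Rightarrow> bool" where
  "vanishes_below x q \<longleftrightarrow> (\<forall>p<q. Rep_lc x p = 0)"

lemma vanishes_below_zero [simp]: "vanishes_below 0 q"
  by (simp add: vanishes_below_def)

lemma vanishes_below_uminus [simp]: "vanishes_below (- x) q \<longleftrightarrow> vanishes_below x q"
  by (simp add: vanishes_below_def)

lemma vanishes_below_add: "vanishes_below x q \<Longrightarrow> vanishes_below y q \<Longrightarrow> vanishes_below (x + y) q"
  by (simp add: vanishes_below_def)

lemma vanishes_below_diff: "vanishes_below x q \<Longrightarrow> vanishes_below y q \<Longrightarrow> vanishes_below (x - y) q"
  by (simp add: vanishes_below_def)

lemma vanishes_below_minus_commute: "vanishes_below (x - y) q \<longleftrightarrow> vanishes_below (y - x) q"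
  by (auto simp: vanishes_below_def)

lemma vanishes_below_sum:
  "(\<And>i. i \<in> F \<Longrightarrow> vanishes_below (f i) q) \<Longrightarrow> vanishes_below (sum f F) q"
  by (simp add: vanishes_below_def Rep_lc_sum)

lemma vanishes_below_le: "vanishes_below x q \<Longrightarrow> p \<le> q \<Longrightarrow> vanishes_below x p"
  by (simp add: vanishes_below_def)

lemma lc_eq_zero_if_vanishes: "(\<And>q. vanishes_below x q) \<Longrightarrow> x = 0"
  by (rule lc_eqI) (metis Rep_lc_zero less_add_one vanishes_below_def)

lemma leading_exponent_exists:
  assumes "x \<noteq> 0"
  obtains m where "Rep_lc x m \<noteq> 0" "vanishes_below x m"
proof -
  obtain q where q: "Rep_lc x q \<noteq> 0"
    using assms lc_eqI[of x 0] by auto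
  define S where "S = {p. p < q + 1 \<and> Rep_lc x p \<noteq> 0}"
  have "finite S" "q \<in> S"
    using left_finite_Rep_lc[of x] q by (simp_all add: left_finite_def S_def)
  then have Min: "Min S \<in> S" "Min S \<le> q" "\<And>p. p \<in> S \<Longrightarrow> Min S \<le> p"
    by (auto intro: Min_in)
  have "Rep_lc x p = 0" if "p < Min S" for p
  proof (rule ccontr)
    assume "Rep_lc x p \<noteq> 0"
    with that Min(2) have "p \<in> S" by (simp add: S_def)
    with that Min(3) show False by fastforce
  qed
  then have "vanishes_below x (Min S)" by (simp add: vanishes_below_def)
  moreover have "Rep_lc x (Min S) \<noteq> 0" using Min(1) unfolding S_def by blast
  ultimately show thesis by (intro that)
qed

lemma leading_exponent_unique:
  assumes "Rep_lc x m \<noteq> 0" "vanishes_below x m" "Rep_lc x m' \<noteq> 0" "vanishes_below x m'"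
  shows "m = m'"
  using assms by (metis linorder_neqE vanishes_below_def)

lemma Rep_lc_nonneg_upto_leading:
  "0 < Rep_lc x m \<Longrightarrow> vanishes_below x m \<Longrightarrow> k \<le> m \<Longrightarrow> 0 \<le> Rep_lc x k"
  by (cases "k = m") (simp_all add: vanishes_below_def)

lemma lc_pos_iff: "lc_pos x \<longleftrightarrow> (\<exists>m. 0 < Rep_lc x m \<and> vanishes_below x m)"
  unfolding lc_pos_def vanishes_below_def by auto

lemma lc_pos_or_neg: "x \<noteq> 0 \<Longrightarrow> lc_pos x \<or> lc_pos (- x)"
  by (rule leading_exponent_exists[of x])
    (auto simp: lc_pos_iff vanishes_below_def linorder_neq_iff)

lemma lc_pos_not_neg: assumes "lc_pos x" shows "\<not> lc_pos (- x)"
proof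
  assume "lc_pos (- x)"
  then obtain m' where "Rep_lc x m' < 0" "vanishes_below x m'"
    by (auto simp: lc_pos_iff vanishes_below_def)
  moreover obtain m where "0 < Rep_lc x m" "vanishes_below x m"
    using assms by (auto simp: lc_pos_iff)
  ultimately show False by (metis leading_exponent_unique less_asym less_irrefl)
qed

lemma lc_pos_add: assumes "lc_pos x" "lc_pos y" shows "lc_pos (x + y)"
proof -
  obtain m m' where m: "0 < Rep_lc x m" "vanishes_below x m"
    and m': "0 < Rep_lc y m'" "vanishes_below y m'"
    using assms by (auto simp: lc_pos_iff)
  define k where "k = min m m'"
  have "vanishes_below (x + y) k"
    using m(2) m'(2) by (intro vanishes_below_add) (auto simp: k_def elim: vanishes_below_le)
  moreover have "0 \<le> Rep_lc x k" "0 \<le> Rep_lc y k"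
    using m m' by (auto simp: k_def intro: Rep_lc_nonneg_upto_leading)
  moreover have "k = m \<or> k = m'" by (simp add: k_def min_def)
  ultimately have "0 < Rep_lc (x + y) k \<and> vanishes_below (x + y) k"
    using m(1) m'(1) by auto
  then show ?thesis by (auto simp: lc_pos_iff)
qed

instance lc :: linorder
proof
  fix x y z :: lc
  show "(x < y) = (x \<le> y \<and> \<not> y \<le> x)"
    unfolding less_lc_def less_eq_lc_def
    by (metis lc_pos_def lc_pos_not_neg minus_diff_eq right_minus_eq)
  show "x \<le> x" by (simp add: less_eq_lc_def)
  show "x \<le> y \<Longrightarrow> y \<le> z \<Longrightarrow> x \<le> z"
    unfolding less_lc_def less_eq_lc_def
    by (metis diff_add_cancel add_diff_eq lc_pos_add add.commute diff_diff_eq2)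
  show "x \<le> y \<Longrightarrow> y \<le> x \<Longrightarrow> x = y"
    unfolding less_lc_def less_eq_lc_def by (metis minus_diff_eq lc_pos_not_neg)
  show "x \<le> y \<or> y \<le> x"
    unfolding less_lc_def less_eq_lc_def by (metis minus_diff_eq lc_pos_or_neg right_minus_eq)
qed

instance lc :: linordered_ab_group_add
proof
  fix a b c :: lc
  assume "a \<le> b"
  then show "c + a \<le> c + b"
    unfolding less_eq_lc_def less_lc_def add_diff_cancel_left by auto
qed

lemma zero_less_lc_iff: "0 < x \<longleftrightarrow> (\<exists>m. 0 < Rep_lc x m \<and> vanishes_below x m)"
  by (simp add: less_lc_def lc_pos_iff)

lemma leading_coeff_pos:
  assumes "0 < x" "Rep_lc x m \<noteq> 0" "vanishes_below x m" shows "0 < Rep_lc x m"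
proof -
  obtain m' where "0 < Rep_lc x m'" "vanishes_below x m'"
    using assms(1) by (auto simp: zero_less_lc_iff)
  with assms(2,3) show ?thesis by (metis leading_exponent_unique less_irrefl)
qed

lemma lc_positive_stable:
  assumes "0 < z" obtains q where "\<And>w. vanishes_below (w - z) q \<Longrightarrow> 0 < w"
proof -
  obtain m where m: "0 < Rep_lc z m" "vanishes_below z m"
    using assms by (auto simp: zero_less_lc_iff)
  have "0 < w" if "vanishes_below (w - z) (m + 1)" for w
  proof -
    have "\<forall>p<m+1. Rep_lc w p = Rep_lc z p"
      using that by (simp add: vanishes_below_def)
    then have "0 < Rep_lc w m" "vanishes_below w m"
      using m by (auto simp: vanishes_below_def)
    then show ?thesis by (auto simp: zero_less_lc_iff)
  qed
  then show thesis by (rule that)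
qed

lemma vanishes_below_mono:
  assumes "0 \<le> x" "x \<le> y" "vanishes_below y q" shows "vanishes_below x q"
proof (rule ccontr)
  assume "\<not> vanishes_below x q"
  then have "0 < x" using assms(1) by (metis order.not_eq_order_implies_strict vanishes_below_zero)
  then obtain m where m: "0 < Rep_lc x m" "vanishes_below x m"
    by (auto simp: zero_less_lc_iff)
  with \<open>\<not> vanishes_below x q\<close> have "m < q"
    by (metis leI less_le_trans vanishes_below_def)
  have "\<exists>k\<le>m. 0 < Rep_lc y k"
  proof (cases "x = y")
    case False
    then have "0 < y - x" using assms(2) by simp
    then obtain m' where m': "0 < Rep_lc (y - x) m'" "vanishes_below (y - x) m'"
      unfolding zero_less_lc_iff by blast
    have "0 \<le> Rep_lc x (min m m')" "0 \<le> Rep_lc (y - x) (min m m')"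
      using Rep_lc_nonneg_upto_leading[OF m, of "min m m'"]
        Rep_lc_nonneg_upto_leading[OF m', of "min m m'"] by simp_all
    moreover have "min m m' = m \<or> min m m' = m'" by (simp add: min_def)
    ultimately have "0 < Rep_lc y (min m m')" using m(1) m'(1) by auto
    then show ?thesis by (intro exI[of _ "min m m'"]) simp
  qed (use m in auto)
  then show False using \<open>m < q\<close> assms(3) by (auto simp: vanishes_below_def)
qed

definition lc_monom :: "real \<Rightarrow> rat \<Rightarrow> lc" where
  "lc_monom r q = Abs_lc (\<lambda>p. if p = q then r else 0)"

lemma Rep_lc_monom [simp]: "Rep_lc (lc_monom r q) p = (if p = q then r else 0)"
  unfolding lc_monom_def
  by (subst Rep_lc_Abs_lc) (auto simp: left_finite_def intro: finite_subset[of _ "{q}"])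

lemma lc_monom_pos: "0 < r \<Longrightarrow> 0 < lc_monom r q"
  by (auto simp: zero_less_lc_iff vanishes_below_def)

lemma vanishes_below_monom: "vanishes_below (lc_monom r p) q \<longleftrightarrow> q \<le> p \<or> r = 0"
  by (auto simp: vanishes_below_def)

lemma vanishes_below_if_less_monom:
  assumes "- lc_monom 1 q < z" "z < lc_monom 1 q" shows "vanishes_below z q"
proof (rule ccontr)
  assume "\<not> vanishes_below z q"
  then have "z \<noteq> 0" by auto
  then obtain m where m: "Rep_lc z m \<noteq> 0" "vanishes_below z m"
    by (rule leading_exponent_exists)
  then have "m < q" using \<open>\<not> vanishes_below z q\<close> by (metis leI le_less_trans vanishes_below_def)
  then have "vanishes_below (lc_monom 1 q - z) m" "vanishes_below (z + lc_monom 1 q) m"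
    using m(2) by (auto simp: vanishes_below_def)
  moreover have "0 < lc_monom 1 q - z" "0 < z + lc_monom 1 q"
    using assms by (simp, metis diff_gt_0_iff_gt diff_minus_eq_add)
  moreover have "Rep_lc (lc_monom 1 q - z) m = - Rep_lc z m" "Rep_lc (z + lc_monom 1 q) m = Rep_lc z m"
    using \<open>m < q\<close> by simp_all
  ultimately have "0 < - Rep_lc z m" "0 < Rep_lc z m"
    using leading_coeff_pos m(1) by (metis neg_equal_0_iff_equal)+
  then show False by simp
qed

definition lc_half :: "lc \<Rightarrow> lc" where
  "lc_half x = Abs_lc (\<lambda>q. Rep_lc x q / 2)"

lemma Rep_lc_half [simp]: "Rep_lc (lc_half x) q = Rep_lc x q / 2"
  unfolding lc_half_def by (subst Rep_lc_Abs_lc) (rule left_finite_Rep_lc_pointwise[of x x], auto)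

instance lc :: dense_linorder
proof
  fix x y :: lc
  assume "x < y"
  then have "0 < y - x" by simp
  then obtain m where "0 < Rep_lc (y - x) m" "vanishes_below (y - x) m"
    unfolding zero_less_lc_iff by blast
  then have "0 < lc_half (y - x)"
    unfolding zero_less_lc_iff by (intro exI[of _ m]) (simp add: vanishes_below_def)
  moreover have "lc_half (y - x) + lc_half (y - x) = y - x"
    by (rule lc_eqI) simp
  ultimately have "x < x + lc_half (y - x)" "x + lc_half (y - x) < y"
    by (simp_all add: algebra_simps) (metis add_less_cancel_left add.right_neutral)
  then show "\<exists>z. x < z \<and> z < y" by blast
qed

lemma le_epsilon_dense:
  fixes x y :: "'a::{linordered_ab_group_add, dense_linorder}"
  assumes "\<And>e. 0 < e \<Longrightarrow> x \<le> y + e" shows "x \<le> y"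
proof (rule ccontr)
  assume "\<not> x \<le> y"
  then obtain z where "y < z" "z < x" using dense by (metis not_le)
  then have "x \<le> z" using assms[of "z - y"] by simp
  then show False using \<open>z < x\<close> by simp
qed

lemma lc_tendsto_iff:
  "lc_tendsto f L \<longleftrightarrow> (\<forall>q. \<exists>N. \<forall>n\<ge>N. vanishes_below (f n - L) q)"
proof
  assume lim: "lc_tendsto f L"
  show "\<forall>q. \<exists>N. \<forall>n\<ge>N. vanishes_below (f n - L) q"
  proof
    fix q
    have "L - lc_monom 1 q < L" "L < L + lc_monom 1 q"
      using lc_monom_pos[of 1 q] by simp_all
    then obtain N where "\<forall>n\<ge>N. L - lc_monom 1 q < f n \<and> f n < L + lc_monom 1 q"
      using lim unfolding lc_tendsto_def by blast
    then have "\<forall>n\<ge>N. - lc_monom 1 q < f n - L \<and> f n - L < lc_monom 1 q"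
      by (simp add: algebra_simps)
    then show "\<exists>N. \<forall>n\<ge>N. vanishes_below (f n - L) q"
      by (blast intro: vanishes_below_if_less_monom)
  qed
next
  assume small: "\<forall>q. \<exists>N. \<forall>n\<ge>N. vanishes_below (f n - L) q"
  show "lc_tendsto f L" unfolding lc_tendsto_def
  proof (intro allI impI)
    fix a b assume "a < L \<and> L < b"
    then have "0 < L - a" "0 < b - L" by simp_all
    obtain qa where qa: "\<And>w. vanishes_below (w - (L - a)) qa \<Longrightarrow> 0 < w"
      using lc_positive_stable[OF \<open>0 < L - a\<close>] by blast
    obtain qb where qb: "\<And>w. vanishes_below (w - (b - L)) qb \<Longrightarrow> 0 < w"
      using lc_positive_stable[OF \<open>0 < b - L\<close>] by blast
    obtain N where N: "\<forall>n\<ge>N. vanishes_below (f n - L) (max qa qb)" using small by blast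
    have "a < f n \<and> f n < b" if "n \<ge> N" for n
    proof -
      have "vanishes_below (f n - L) qa" "vanishes_below (f n - L) qb"
        using N that by (auto simp: vanishes_below_def)
      then have "0 < f n - a" "0 < b - f n"
        using qa[of "f n - a"] qb[of "b - f n"] by (auto simp: vanishes_below_def)
      then show ?thesis by simp
    qed
    then show "\<exists>N. \<forall>n\<ge>N. a < f n \<and> f n < b" by blast
  qed
qed

lemma le_of_le_add_limit_gap:
  fixes x y :: lc
  assumes "lc_tendsto g L" "\<And>N. x \<le> y + (L - g N)"
  shows "x \<le> y"
proof (rule le_epsilon_dense)
  fix e :: lc assume "0 < e"
  then have "L - e < L" "L < L + e" by simp_all
  then obtain N where "L - e < g N"
    using assms(1)[unfolded lc_tendsto_def, rule_format, of "L - e" "L + e"] by blast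
  then have "y + (L - g N) \<le> y + e"
    by (simp add: diff_less_eq diff_le_eq add.commute less_imp_le)
  then show "x \<le> y + e" using assms(2)[of N] by (rule order.trans[rotated])
qed

section \<open>Summable families\<close>

text \<open>Unordered sums: summability says that the terms tend to \<open>0\<close> along every enumeration of
  the index set, and the sum is computed coefficientwise (its value is unspecified for
  non-summable families).\<close>

definition lc_summable :: "('i \<Rightarrow> lc) \<Rightarrow> bool" where
  "lc_summable a \<longleftrightarrow> (\<forall>q. finite {i. \<not> vanishes_below (a i) q})"

definition lc_sum :: "('i \<Rightarrow> lc) \<Rightarrow> lc" where
  "lc_sum a = Abs_lc (\<lambda>p. \<Sum>i\<in>{i. Rep_lc (a i) p \<noteq> 0}. Rep_lc (a i) p)"

lemma lc_summable_finite_coeff_support: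
  assumes "lc_summable a" shows "finite {i. Rep_lc (a i) p \<noteq> 0}"
proof -
  have "{i. Rep_lc (a i) p \<noteq> 0} \<subseteq> {i. \<not> vanishes_below (a i) (p + 1)}"
    by (auto simp: vanishes_below_def intro!: exI[of _ p])
  then show ?thesis
    using assms unfolding lc_summable_def by (blast intro: finite_subset)
qed

lemma Rep_lc_lc_sum:
  assumes "lc_summable a" "finite X" "{i. Rep_lc (a i) p \<noteq> 0} \<subseteq> X"
  shows "Rep_lc (lc_sum a) p = (\<Sum>i\<in>X. Rep_lc (a i) p)"
proof -
  have "left_finite (\<lambda>p. \<Sum>i\<in>{i. Rep_lc (a i) p \<noteq> 0}. Rep_lc (a i) p)"
    unfolding left_finite_def
  proof
    fix q
    have "{p. p < q \<and> (\<Sum>i\<in>{i. Rep_lc (a i) p \<noteq> 0}. Rep_lc (a i) p) \<noteq> 0}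
        \<subseteq> (\<Union>i\<in>{i. \<not> vanishes_below (a i) q}. {p. p < q \<and> Rep_lc (a i) p \<noteq> 0})"
    proof clarify
      fix p assume "p < q" "(\<Sum>i\<in>{i. Rep_lc (a i) p \<noteq> 0}. Rep_lc (a i) p) \<noteq> 0"
      then obtain i where "Rep_lc (a i) p \<noteq> 0"
        by (blast elim: sum.not_neutral_contains_not_neutral)
      with \<open>p < q\<close> show "p \<in> (\<Union>i\<in>{i. \<not> vanishes_below (a i) q}. {p. p < q \<and> Rep_lc (a i) p \<noteq> 0})"
        by (auto simp: vanishes_below_def)
    qed
    moreover have "finite (\<Union>i\<in>{i. \<not> vanishes_below (a i) q}. {p. p < q \<and> Rep_lc (a i) p \<noteq> 0})"
      using assms(1) left_finite_Rep_lc by (auto simp: lc_summable_def left_finite_def)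
    ultimately show "finite {p. p < q \<and> (\<Sum>i\<in>{i. Rep_lc (a i) p \<noteq> 0}. Rep_lc (a i) p) \<noteq> 0}"
      by (rule finite_subset)
  qed
  then have "Rep_lc (lc_sum a) p = (\<Sum>i\<in>{i. Rep_lc (a i) p \<noteq> 0}. Rep_lc (a i) p)"
    by (simp add: lc_sum_def Rep_lc_Abs_lc)
  also have "\<dots> = (\<Sum>i\<in>X. Rep_lc (a i) p)"
    by (rule sum.mono_neutral_left) (use assms in auto)
  finally show ?thesis .
qed

lemma lc_summable_pointwise:
  assumes "lc_summable a" "lc_summable b"
    and "\<And>i q. vanishes_below (a i) q \<Longrightarrow> vanishes_below (b i) q \<Longrightarrow> vanishes_below (c i) q"
  shows "lc_summable c"
  unfolding lc_summable_def
proof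
  fix q
  have "{i. \<not> vanishes_below (c i) q}
      \<subseteq> {i. \<not> vanishes_below (a i) q} \<union> {i. \<not> vanishes_below (b i) q}"
    using assms(3) by blast
  moreover have "finite ({i. \<not> vanishes_below (a i) q} \<union> {i. \<not> vanishes_below (b i) q})"
    using assms(1,2) by (simp add: lc_summable_def)
  ultimately show "finite {i. \<not> vanishes_below (c i) q}" by (rule finite_subset)
qed

lemma lc_summable_add: "lc_summable a \<Longrightarrow> lc_summable b \<Longrightarrow> lc_summable (\<lambda>i. a i + b i)"
  using lc_summable_pointwise[of a b "\<lambda>i. a i + b i"] vanishes_below_add by blast

lemma lc_summable_diff: "lc_summable a \<Longrightarrow> lc_summable b \<Longrightarrow> lc_summable (\<lambda>i. a i - b i)"
  using lc_summable_pointwise[of a b "\<lambda>i. a i - b i"] vanishes_below_diff by blast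

lemma lc_summable_restrict: "lc_summable a \<Longrightarrow> lc_summable (\<lambda>i. if P i then a i else 0)"
  by (rule lc_summable_pointwise[of a a]) simp_all

lemma lc_sum_diff:
  assumes "lc_summable a" "lc_summable b"
  shows "lc_sum (\<lambda>i. a i - b i) = lc_sum a - lc_sum b"
proof (rule lc_eqI)
  fix p
  define X where "X = {i. Rep_lc (a i) p \<noteq> 0} \<union> {i. Rep_lc (b i) p \<noteq> 0}"
  have "finite X"
    using assms by (simp add: X_def lc_summable_finite_coeff_support)
  then show "Rep_lc (lc_sum (\<lambda>i. a i - b i)) p = Rep_lc (lc_sum a - lc_sum b) p"
    using assms lc_summable_diff[OF assms]
    by (simp add: Rep_lc_lc_sum[where X = X] X_def sum_subtractf subset_iff)
qed

lemma lc_sum_add: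
  assumes "lc_summable a" "lc_summable b"
  shows "lc_sum (\<lambda>i. a i + b i) = lc_sum a + lc_sum b"
proof (rule lc_eqI)
  fix p
  define X where "X = {i. Rep_lc (a i) p \<noteq> 0} \<union> {i. Rep_lc (b i) p \<noteq> 0}"
  have "finite X"
    using assms by (simp add: X_def lc_summable_finite_coeff_support)
  then show "Rep_lc (lc_sum (\<lambda>i. a i + b i)) p = Rep_lc (lc_sum a + lc_sum b) p"
    using assms lc_summable_add[OF assms]
    by (simp add: Rep_lc_lc_sum[where X = X] X_def sum.distrib subset_iff)
qed

lemma vanishes_below_lc_sum_minus_sum:
  assumes "lc_summable a" "finite F" "{i. \<not> vanishes_below (a i) q} \<subseteq> F"
  shows "vanishes_below (lc_sum a - sum a F) q"
  unfolding vanishes_below_def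
proof (intro allI impI)
  fix p assume "p < q"
  then have "{i. Rep_lc (a i) p \<noteq> 0} \<subseteq> F"
    using assms(3) by (auto simp: vanishes_below_def)
  then show "Rep_lc (lc_sum a - sum a F) p = 0"
    using Rep_lc_lc_sum[OF assms(1,2)] by (simp add: Rep_lc_sum)
qed

lemma vanishes_below_lc_sum:
  "lc_summable a \<Longrightarrow> (\<And>i. vanishes_below (a i) q) \<Longrightarrow> vanishes_below (lc_sum a) q"
  using vanishes_below_lc_sum_minus_sum[of a "{}" q] by simp

lemma lc_summable_le:
  assumes "\<And>i. 0 \<le> a i" "\<And>i. a i \<le> b i" "lc_summable b"
  shows "lc_summable a"
  using assms(3) vanishes_below_mono[OF assms(1,2)]
  unfolding lc_summable_def by (blast intro: finite_subset[rotated])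

lemma lc_sum_nonneg:
  assumes "lc_summable a" "\<And>i. 0 \<le> a i" shows "0 \<le> lc_sum a"
proof (rule ccontr)
  assume "\<not> 0 \<le> lc_sum a"
  then have "0 < - lc_sum a" by simp
  then obtain q where q: "\<And>w. vanishes_below (w - - lc_sum a) q \<Longrightarrow> 0 < w"
    using lc_positive_stable by blast
  \<comment> \<open>below \<open>q\<close>, which decides the sign, the sum agrees with a finite partial sum\<close>
  define F where "F = {i. \<not> vanishes_below (a i) q}"
  have "finite F" using assms(1) by (simp add: lc_summable_def F_def)
  then have "vanishes_below (lc_sum a - sum a F) q"
    by (rule vanishes_below_lc_sum_minus_sum[OF assms(1)]) (simp add: F_def)
  then have "0 < - sum a F"
    using q[of "- sum a F"] by (simp add: vanishes_below_minus_commute)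
  moreover have "0 \<le> sum a F" using assms(2) by (simp add: sum_nonneg)
  ultimately show False by simp
qed

lemma lc_sum_mono:
  assumes "lc_summable a" "lc_summable b" "\<And>i. a i \<le> b i"
  shows "lc_sum a \<le> lc_sum b"
  using lc_sum_nonneg[OF lc_summable_diff[OF assms(2,1)]] assms(3)
  by (simp add: lc_sum_diff[OF assms(2,1)])

lemma lc_summable_reindex:
  assumes "inj h" "lc_summable a" shows "lc_summable (a \<circ> h)"
  unfolding lc_summable_def
proof
  fix q
  have "{i. \<not> vanishes_below ((a \<circ> h) i) q} = h -` {j. \<not> vanishes_below (a j) q}" by auto
  moreover have "finite (h -` {j. \<not> vanishes_below (a j) q})"
    using assms by (intro finite_vimageI) (auto simp: lc_summable_def)
  ultimately show "finite {i. \<not> vanishes_below ((a \<circ> h) i) q}" by simp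
qed

lemma lc_sum_reindex:
  assumes "bij h" "lc_summable a" shows "lc_sum (a \<circ> h) = lc_sum a"
proof (rule lc_eqI)
  fix p
  define S where "S = {j. Rep_lc (a j) p \<noteq> 0}"
  have "finite S" using lc_summable_finite_coeff_support[OF assms(2)] by (simp add: S_def)
  moreover have "inj h" using assms(1) by (simp add: bij_def)
  ultimately have "finite (h -` S)" by (simp add: finite_vimageI)
  then have "Rep_lc (lc_sum (a \<circ> h)) p = (\<Sum>i\<in>h -` S. Rep_lc (a (h i)) p)"
    using lc_summable_reindex[OF \<open>inj h\<close> assms(2)] by (subst Rep_lc_lc_sum) (auto simp: S_def)
  also have "\<dots> = (\<Sum>j\<in>h ` (h -` S). Rep_lc (a j) p)"
    by (simp only: sum.reindex[OF inj_on_subset[OF \<open>inj h\<close> subset_UNIV]] comp_def)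
  also have "h ` (h -` S) = S" using assms(1) by (simp add: bij_def surj_image_vimage_eq)
  also have "(\<Sum>j\<in>S. Rep_lc (a j) p) = Rep_lc (lc_sum a) p"
    using \<open>finite S\<close> by (subst Rep_lc_lc_sum[OF assms(2)]) (auto simp: S_def)
  finally show "Rep_lc (lc_sum (a \<circ> h)) p = Rep_lc (lc_sum a) p" .
qed

lemma lc_summable_case_sum:
  assumes "lc_summable a" "lc_summable b" shows "lc_summable (case_sum a b)"
  unfolding lc_summable_def
proof
  fix q
  have "{i. \<not> vanishes_below (case_sum a b i) q}
      = {i. \<not> vanishes_below (a i) q} <+> {i. \<not> vanishes_below (b i) q}"
    by (rule set_eqI, case_tac x) auto
  then show "finite {i. \<not> vanishes_below (case_sum a b i) q}"
    using assms by (simp add: lc_summable_def)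
qed

lemma lc_sum_case_sum:
  assumes "lc_summable a" "lc_summable b"
  shows "lc_sum (case_sum a b) = lc_sum a + lc_sum b"
proof (rule lc_eqI)
  fix p
  define Xa Xb where "Xa = {i. Rep_lc (a i) p \<noteq> 0}" and "Xb = {i. Rep_lc (b i) p \<noteq> 0}"
  have "finite Xa" "finite Xb"
    using assms by (simp_all add: Xa_def Xb_def lc_summable_finite_coeff_support)
  moreover have "{i. Rep_lc (case_sum a b i) p \<noteq> 0} \<subseteq> Xa <+> Xb"
    by (rule subsetI, case_tac x) (auto simp: Xa_def Xb_def)
  ultimately show "Rep_lc (lc_sum (case_sum a b)) p = Rep_lc (lc_sum a + lc_sum b) p"
    using assms lc_summable_case_sum[OF assms]
    by (simp add: Rep_lc_lc_sum[where X = "Xa <+> Xb"] Rep_lc_lc_sum[where X = Xa]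
        Rep_lc_lc_sum[where X = Xb] sum.Plus comp_def Xa_def Xb_def)
qed

lemma lc_summable_pairI:
  fixes f :: "'k \<times> 'j \<Rightarrow> lc"
  assumes "lc_summable g" "\<And>k j. 0 \<le> f (k, j)" "\<And>k j. f (k, j) \<le> g k"
    and "\<And>q. finite {j. \<exists>k. \<not> vanishes_below (f (k, j)) q}"
  shows "lc_summable f"
  unfolding lc_summable_def
proof
  fix q
  have "{x. \<not> vanishes_below (f x) q}
      \<subseteq> {k. \<not> vanishes_below (g k) q} \<times> {j. \<exists>k. \<not> vanishes_below (f (k, j)) q}"
    using vanishes_below_mono[OF assms(2,3)] by auto
  moreover have "finite ({k. \<not> vanishes_below (g k) q} \<times> {j. \<exists>k. \<not> vanishes_below (f (k, j)) q})"
    using assms(1,4) by (simp add: lc_summable_def)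
  ultimately show "finite {x. \<not> vanishes_below (f x) q}" by (rule finite_subset)
qed

lemma lc_sum_pair_finite:
  fixes f :: "'k \<times> 'j \<Rightarrow> lc"
  assumes "lc_summable f" "finite F" "\<And>k j. j \<notin> F \<Longrightarrow> f (k, j) = 0"
  shows "lc_summable (\<lambda>k. \<Sum>j\<in>F. f (k, j))" "lc_sum (\<lambda>k. \<Sum>j\<in>F. f (k, j)) = lc_sum f"
proof -
  show summable: "lc_summable (\<lambda>k. \<Sum>j\<in>F. f (k, j))"
    unfolding lc_summable_def
  proof
    fix q
    have "{k. \<not> vanishes_below (\<Sum>j\<in>F. f (k, j)) q} \<subseteq> fst ` {x. \<not> vanishes_below (f x) q}"
      by (force intro: vanishes_below_sum)
    then show "finite {k. \<not> vanishes_below (\<Sum>j\<in>F. f (k, j)) q}"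
      using assms(1) by (auto simp: lc_summable_def intro: finite_subset)
  qed
  show "lc_sum (\<lambda>k. \<Sum>j\<in>F. f (k, j)) = lc_sum f"
  proof (rule lc_eqI)
    fix p
    define K where "K = fst ` {x. Rep_lc (f x) p \<noteq> 0}"
    have "finite K"
      using lc_summable_finite_coeff_support[OF assms(1)] by (simp add: K_def)
    have supp: "{x. Rep_lc (f x) p \<noteq> 0} \<subseteq> K \<times> F"
      using assms(3) by (force simp: K_def)
    have "{k. Rep_lc (\<Sum>j\<in>F. f (k, j)) p \<noteq> 0} \<subseteq> K"
      by (force simp: K_def Rep_lc_sum elim: sum.not_neutral_contains_not_neutral)
    then have "Rep_lc (lc_sum (\<lambda>k. \<Sum>j\<in>F. f (k, j))) p = (\<Sum>k\<in>K. \<Sum>j\<in>F. Rep_lc (f (k, j)) p)"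
      using Rep_lc_lc_sum[OF summable \<open>finite K\<close>] by (simp add: Rep_lc_sum)
    also have "\<dots> = (\<Sum>x\<in>K \<times> F. Rep_lc (f x) p)"
      by (simp add: sum.cartesian_product)
    also have "\<dots> = Rep_lc (lc_sum f) p"
      using Rep_lc_lc_sum[OF assms(1) _ supp] \<open>finite K\<close> assms(2) by simp
    finally show "Rep_lc (lc_sum (\<lambda>k. \<Sum>j\<in>F. f (k, j))) p = Rep_lc (lc_sum f) p" .
  qed
qed

lemma lc_sum_bounded_rows:
  fixes f :: "'k \<times> nat \<Rightarrow> lc"
  assumes "lc_summable g" "\<And>k j. 0 \<le> f (k, j)" "\<And>k j. f (k, j) \<le> g k"
    and "\<And>k j. M \<le> j \<Longrightarrow> f (k, j) = 0"
  shows "lc_summable f" "lc_summable (\<lambda>k. \<Sum>j<M. f (k, j))"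
    and "lc_sum f = lc_sum (\<lambda>k. \<Sum>j<M. f (k, j))"
proof -
  have zero: "f (k, j) = 0" if "j \<notin> {..<M}" for k j
    using assms(4) that by simp
  show summable: "lc_summable f"
  proof (rule lc_summable_pairI[OF assms(1-3)])
    fix q
    have "{j. \<exists>k. \<not> vanishes_below (f (k, j)) q} \<subseteq> {..<M}"
      using zero by fastforce
    then show "finite {j. \<exists>k. \<not> vanishes_below (f (k, j)) q}"
      by (rule finite_subset) simp
  qed
  show "lc_summable (\<lambda>k. \<Sum>j<M. f (k, j))"
    using lc_sum_pair_finite(1)[OF summable finite_lessThan zero] by simp
  show "lc_sum f = lc_sum (\<lambda>k. \<Sum>j<M. f (k, j))"
    using lc_sum_pair_finite(2)[OF summable finite_lessThan zero] by simp
qed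

lemma lc_summable_nat_iff:
  "lc_summable (a :: nat \<Rightarrow> lc) \<longleftrightarrow> (\<forall>q. \<exists>N. \<forall>n\<ge>N. vanishes_below (a n) q)"
  unfolding lc_summable_def finite_nat_set_iff_bounded
  by (meson linorder_not_le mem_Collect_eq)

lemma lc_psum_eq_sum: "lc_psum a n = sum a {..<n}"
  by (induction n) (simp_all add: add.commute)

lemma vanishes_below_lc_sum_minus_partial_sum:
  fixes a :: "nat \<Rightarrow> lc"
  assumes "lc_summable a" "\<forall>n\<ge>N. vanishes_below (a n) q" "N \<le> n"
  shows "vanishes_below (lc_sum a - sum a {..<n}) q"
proof (rule vanishes_below_lc_sum_minus_sum[OF assms(1) finite_lessThan], rule subsetI)
  fix i assume "i \<in> {i. \<not> vanishes_below (a i) q}"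
  with assms(2) have "i < N" by (meson linorder_not_le mem_Collect_eq)
  with assms(3) show "i \<in> {..<n}" by simp
qed

lemma lc_sums_iff: "lc_sums a s \<longleftrightarrow> lc_summable a \<and> s = lc_sum a"
proof
  assume "lc_summable a \<and> s = lc_sum a"
  then have summable: "lc_summable a" and s: "s = lc_sum a" by auto
  show "lc_sums a s"
    unfolding lc_sums_def lc_tendsto_iff lc_psum_eq_sum s
  proof
    fix q
    obtain N where "\<forall>n\<ge>N. vanishes_below (a n) q"
      using summable by (auto simp: lc_summable_nat_iff)
    then have "vanishes_below (lc_sum a - sum a {..<n}) q" if "n \<ge> N" for n
      using vanishes_below_lc_sum_minus_partial_sum summable that by blast
    then show "\<exists>N. \<forall>n\<ge>N. vanishes_below (sum a {..<n} - lc_sum a) q"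
      by (auto simp: vanishes_below_minus_commute)
  qed
next
  assume "lc_sums a s"
  then have lim: "\<forall>q. \<exists>N. \<forall>n\<ge>N. vanishes_below (sum a {..<n} - s) q"
    unfolding lc_sums_def lc_tendsto_iff lc_psum_eq_sum .
  have summable: "lc_summable a"
    unfolding lc_summable_nat_iff
  proof
    fix q
    obtain N where N: "\<forall>n\<ge>N. vanishes_below (sum a {..<n} - s) q" using lim by blast
    have "vanishes_below (a n) q" if "n \<ge> N" for n
      using vanishes_below_diff[OF N[rule_format, of "Suc n"] N[rule_format, of n]] that by simp
    then show "\<exists>N. \<forall>n\<ge>N. vanishes_below (a n) q" by blast
  qed
  have "s - lc_sum a = 0"
  proof (rule lc_eq_zero_if_vanishes)
    fix q
    obtain N where N: "\<forall>n\<ge>N. vanishes_below (sum a {..<n} - s) q" using lim by blast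
    obtain N' where N': "\<forall>n\<ge>N'. vanishes_below (a n) q"
      using summable by (auto simp: lc_summable_nat_iff)
    have "vanishes_below (lc_sum a - sum a {..<max N N'}) q"
      using vanishes_below_lc_sum_minus_partial_sum[OF summable N'] by simp
    with N have "vanishes_below ((sum a {..<max N N'} - s) + (lc_sum a - sum a {..<max N N'})) q"
      by (intro vanishes_below_add) auto
    then show "vanishes_below (s - lc_sum a) q"
      by (simp add: vanishes_below_minus_commute)
  qed
  then show "lc_summable a \<and> s = lc_sum a" using summable by simp
qed

lemma lc_sum_truncations_tendsto:
  fixes f :: "'i \<Rightarrow> lc" and r :: "'i \<Rightarrow> nat"
  assumes "lc_summable f"
  shows "lc_tendsto (\<lambda>N. lc_sum (\<lambda>i. if r i < N then f i else 0)) (lc_sum f)"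
  unfolding lc_tendsto_iff
proof
  fix q
  have "finite (r ` {i. \<not> vanishes_below (f i) q})"
    using assms by (simp add: lc_summable_def)
  then obtain N where N: "\<And>i. \<not> vanishes_below (f i) q \<Longrightarrow> r i < N"
    by (auto simp: finite_nat_set_iff_bounded)
  have "vanishes_below (lc_sum (\<lambda>i. if r i < n then f i else 0) - lc_sum f) q" if "n \<ge> N" for n
  proof -
    have "vanishes_below ((if r i < n then f i else 0) - f i) q" for i
    proof (cases "r i < n")
      case False
      then have "vanishes_below (f i) q" using N[of i] that by (meson less_le_trans)
      then show ?thesis using False by simp
    qed simp
    then show ?thesis
      using lc_summable_restrict[OF assms]
      by (simp add: lc_sum_diff[symmetric] assms vanishes_below_lc_sum lc_summable_diff)
  qed
  then show "\<exists>N. \<forall>n\<ge>N. vanishes_below (lc_sum (\<lambda>i. if r i < n then f i else 0) - lc_sum f) q"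
    by blast
qed

lemma exists_small_positive_family:
  assumes "0 < \<epsilon>"
  obtains e :: "'i::countable \<Rightarrow> lc" where "\<And>i. 0 < e i" "lc_summable e" "lc_sum e < \<epsilon>"
proof -
  obtain q where q: "\<And>w. vanishes_below (w - \<epsilon>) q \<Longrightarrow> 0 < w"
    using lc_positive_stable[OF assms] by blast
  define e :: "'i \<Rightarrow> lc" where "e i = lc_monom 1 (q + of_nat (to_nat i))" for i
  have summable: "lc_summable e"
    unfolding lc_summable_def
  proof
    fix p
    have "{i. \<not> vanishes_below (e i) p} \<subseteq> to_nat -` {..nat \<lceil>p - q\<rceil>}"
      by (auto simp: e_def vanishes_below_monom) linarith
    then show "finite {i. \<not> vanishes_below (e i) p}"
      by (rule finite_subset) (simp add: finite_vimageI)
  qed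
  have "vanishes_below (lc_sum e) q"
    by (rule vanishes_below_lc_sum[OF summable]) (simp add: e_def vanishes_below_monom)
  then have "0 < \<epsilon> - lc_sum e"
    by (intro q) (simp add: vanishes_below_def)
  then show thesis
    using summable by (intro that[of e]) (simp_all add: e_def lc_monom_pos)
qed

section \<open>Segment arithmetic\<close>

definition seg_len :: "'a \<Rightarrow> 'a \<Rightarrow> 'a::linordered_ab_group_add" where
  "seg_len a b = max 0 (b - a)"

definition overlap_len :: "'a \<Rightarrow> 'a \<Rightarrow> 'a \<Rightarrow> 'a \<Rightarrow> 'a::linordered_ab_group_add" where
  "overlap_len a b c d = seg_len (max a c) (min b d)"

lemma seg_len_nonneg: "0 \<le> seg_len a b"
  by (simp add: seg_len_def)

lemma seg_len_eq: "a \<le> b \<Longrightarrow> seg_len a b = b - a"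
  by (simp add: seg_len_def)

lemma overlap_len_nonneg: "0 \<le> overlap_len a b c d"
  by (simp add: overlap_len_def seg_len_nonneg)

lemma overlap_len_le_left: "overlap_len a b c d \<le> seg_len a b"
  unfolding overlap_len_def seg_len_def by (intro max.mono diff_mono) simp_all

lemma overlap_len_le_right: "overlap_len a b c d \<le> seg_len c d"
  unfolding overlap_len_def seg_len_def by (intro max.mono diff_mono) simp_all

lemma seg_len_pad: assumes "0 \<le> e" shows "max hi (lo + e) - lo \<le> seg_len lo hi + e"
proof (cases "hi \<le> lo + e")
  case True
  then show ?thesis by (simp add: seg_len_def max_def)
next
  case False
  have "lo \<le> lo + e" using assms by simp
  moreover have "lo + e < hi" using False by simp
  ultimately have "lo \<le> hi" by (rule order.trans[OF _ less_imp_le])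
  then show ?thesis using False assms by (simp add: seg_len_def max_def)
qed

lemma overlap_len_min_right: "d \<le> c' \<Longrightarrow> overlap_len lo (min hi c') c d = overlap_len lo hi c d"
  by (auto simp: overlap_len_def min_def)

lemma overlap_len_max_left: "d' \<le> c \<Longrightarrow> overlap_len (max lo d') hi c d = overlap_len lo hi c d"
  by (auto simp: overlap_len_def max_def)

lemma seg_len_split:
  "c < d \<Longrightarrow> seg_len lo hi = seg_len lo (min hi c) + overlap_len lo hi c d + seg_len (max lo d) hi"
  by (auto simp: seg_len_def overlap_len_def max_def min_def algebra_simps)

lemma segment_minus_intervals:
  fixes c d :: "'i \<Rightarrow> 'a::linordered_ab_group_add"
  assumes "finite F" "\<And>n. n \<in> F \<Longrightarrow> c n < d n"
    and "\<And>n m. n \<in> F \<Longrightarrow> m \<in> F \<Longrightarrow> n \<noteq> m \<Longrightarrow> d n \<le> c m \<or> d m \<le> c n"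
  shows "\<exists>ps. length ps = Suc (card F) \<and>
    {lo..hi} - (\<Union>n\<in>F. {c n<..<d n}) \<subseteq> (\<Union>p\<in>set ps. {fst p..snd p}) \<and>
    (\<Sum>p\<leftarrow>ps. seg_len (fst p) (snd p)) = seg_len lo hi - (\<Sum>n\<in>F. overlap_len lo hi (c n) (d n))"
  using assms
proof (induction "card F" arbitrary: F lo hi rule: less_induct)
  case less
  show ?case
  proof (cases "F = {}")
    case True
    then show ?thesis by (intro exI[of _ "[(lo, hi)]"]) auto
  next
    case False
    then obtain J where J: "J \<in> F" by blast
    define FL FR where "FL = {n \<in> F. d n \<le> c J}" and "FR = {n \<in> F. d J \<le> c n}"
    have cdJ: "c J < d J" using less.prems(2) J by blast
    have F_split: "F = insert J (FL \<union> FR)" "J \<notin> FL \<union> FR" "FL \<inter> FR = {}"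
      using less.prems(2,3) J cdJ by (fastforce simp: FL_def FR_def)+
    have fin: "finite FL" "finite FR" using less.prems(1) by (simp_all add: FL_def FR_def)
    then have card_F: "card F = Suc (card FL + card FR)"
      using F_split by (simp add: card_Un_disjoint)
    obtain psL where psL: "length psL = Suc (card FL)"
      "{lo..min hi (c J)} - (\<Union>n\<in>FL. {c n<..<d n}) \<subseteq> (\<Union>p\<in>set psL. {fst p..snd p})"
      "(\<Sum>p\<leftarrow>psL. seg_len (fst p) (snd p))
         = seg_len lo (min hi (c J)) - (\<Sum>n\<in>FL. overlap_len lo (min hi (c J)) (c n) (d n))"
      using less.hyps[of FL lo "min hi (c J)"] less.prems(2,3) card_F fin by (auto simp: FL_def)
    obtain psR where psR: "length psR = Suc (card FR)"
      "{max lo (d J)..hi} - (\<Union>n\<in>FR. {c n<..<d n}) \<subseteq> (\<Union>p\<in>set psR. {fst p..snd p})"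
      "(\<Sum>p\<leftarrow>psR. seg_len (fst p) (snd p))
         = seg_len (max lo (d J)) hi - (\<Sum>n\<in>FR. overlap_len (max lo (d J)) hi (c n) (d n))"
      using less.hyps[of FR "max lo (d J)" hi] less.prems(2,3) card_F fin by (auto simp: FR_def)
    have sums: "(\<Sum>p\<leftarrow>psL @ psR. seg_len (fst p) (snd p))
        = (seg_len lo (min hi (c J)) - (\<Sum>n\<in>FL. overlap_len lo hi (c n) (d n)))
          + (seg_len (max lo (d J)) hi - (\<Sum>n\<in>FR. overlap_len lo hi (c n) (d n)))"
      using psL(3) psR(3) by (simp add: FL_def FR_def overlap_len_min_right overlap_len_max_left)
    have "(\<Sum>n\<in>F. overlap_len lo hi (c n) (d n)) = overlap_len lo hi (c J) (d J)
        + (\<Sum>n\<in>FL. overlap_len lo hi (c n) (d n)) + (\<Sum>n\<in>FR. overlap_len lo hi (c n) (d n))"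
      using F_split fin by (simp add: sum.union_disjoint add.assoc)
    with sums seg_len_split[OF cdJ, of lo hi]
    have "(\<Sum>p\<leftarrow>psL @ psR. seg_len (fst p) (snd p))
        = seg_len lo hi - (\<Sum>n\<in>F. overlap_len lo hi (c n) (d n))"
      by (simp add: algebra_simps)
    moreover have "{lo..hi} - (\<Union>n\<in>F. {c n<..<d n}) \<subseteq> (\<Union>p\<in>set (psL @ psR). {fst p..snd p})"
    proof
      fix x assume x: "x \<in> {lo..hi} - (\<Union>n\<in>F. {c n<..<d n})"
      then have "x \<le> c J \<or> d J \<le> x" using J by force
      then show "x \<in> (\<Union>p\<in>set (psL @ psR). {fst p..snd p})"
      proof
        assume "x \<le> c J"
        then have "x \<in> {lo..min hi (c J)} - (\<Union>n\<in>FL. {c n<..<d n})" using x F_split(1) by auto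
        then have "x \<in> (\<Union>p\<in>set psL. {fst p..snd p})" using psL(2) by blast
        then show ?thesis by auto
      next
        assume "d J \<le> x"
        then have "x \<in> {max lo (d J)..hi} - (\<Union>n\<in>FR. {c n<..<d n})" using x F_split(1) by auto
        then have "x \<in> (\<Union>p\<in>set psR. {fst p..snd p})" using psR(2) by blast
        then show ?thesis by auto
      qed
    qed
    moreover have "length (psL @ psR) = Suc (card F)" using psL(1) psR(1) card_F by simp
    ultimately show ?thesis by blast
  qed
qed

lemma segments_minus_intervals_pieces:
  fixes lo hi :: "'k \<Rightarrow> 'a::linordered_ab_group_add" and c d :: "'i \<Rightarrow> 'a"
  assumes "finite F" "\<And>n. n \<in> F \<Longrightarrow> c n < d n"
    and "\<And>n m. n \<in> F \<Longrightarrow> m \<in> F \<Longrightarrow> n \<noteq> m \<Longrightarrow> d n \<le> c m \<or> d m \<le> c n"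
  obtains P :: "'k \<Rightarrow> nat \<Rightarrow> 'a \<times> 'a" where
    "\<And>k j. Suc (card F) \<le> j \<Longrightarrow> seg_len (fst (P k j)) (snd (P k j)) = 0"
    "\<And>k j. seg_len (fst (P k j)) (snd (P k j)) \<le> seg_len (lo k) (hi k)"
    "\<And>k. {lo k..hi k} - (\<Union>n\<in>F. {c n<..<d n}) \<subseteq> (\<Union>j<Suc (card F). {fst (P k j)..snd (P k j)})"
    "\<And>k. (\<Sum>j<Suc (card F). seg_len (fst (P k j)) (snd (P k j)))
      = seg_len (lo k) (hi k) - (\<Sum>n\<in>F. overlap_len (lo k) (hi k) (c n) (d n))"
proof -
  have "\<exists>p :: nat \<Rightarrow> 'a \<times> 'a.
    (\<forall>j\<ge>Suc (card F). seg_len (fst (p j)) (snd (p j)) = 0) \<and>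
    (\<forall>j. seg_len (fst (p j)) (snd (p j)) \<le> seg_len (lo k) (hi k)) \<and>
    {lo k..hi k} - (\<Union>n\<in>F. {c n<..<d n}) \<subseteq> (\<Union>j<Suc (card F). {fst (p j)..snd (p j)}) \<and>
    (\<Sum>j<Suc (card F). seg_len (fst (p j)) (snd (p j)))
      = seg_len (lo k) (hi k) - (\<Sum>n\<in>F. overlap_len (lo k) (hi k) (c n) (d n))" for k
  proof -
    obtain ps where ps: "length ps = Suc (card F)"
      "{lo k..hi k} - (\<Union>n\<in>F. {c n<..<d n}) \<subseteq> (\<Union>p\<in>set ps. {fst p..snd p})"
      "(\<Sum>p\<leftarrow>ps. seg_len (fst p) (snd p))
         = seg_len (lo k) (hi k) - (\<Sum>n\<in>F. overlap_len (lo k) (hi k) (c n) (d n))"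
      using segment_minus_intervals[of F c d "lo k" "hi k"] assms by blast
    define p where "p j = (if j < length ps then ps ! j else (lo k, lo k))" for j
    have "seg_len (fst (p j)) (snd (p j)) \<le> seg_len (lo k) (hi k)" for j
    proof (cases "j < length ps")
      case True
      then have "seg_len (fst (p j)) (snd (p j)) \<le> (\<Sum>q\<leftarrow>ps. seg_len (fst q) (snd q))"
        by (auto simp: p_def seg_len_nonneg intro!: member_le_sum_list)
      also have "\<dots> \<le> seg_len (lo k) (hi k)"
        using ps(3) by (simp add: sum_nonneg overlap_len_nonneg)
      finally show ?thesis .
    qed (simp add: p_def seg_len_def)
    moreover have "{lo k..hi k} - (\<Union>n\<in>F. {c n<..<d n}) \<subseteq> (\<Union>j<Suc (card F). {fst (p j)..snd (p j)})"
    proof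
      fix x assume "x \<in> {lo k..hi k} - (\<Union>n\<in>F. {c n<..<d n})"
      then obtain q where "q \<in> set ps" "x \<in> {fst q..snd q}" using ps(2) by blast
      moreover from \<open>q \<in> set ps\<close> obtain j where "j < length ps" "q = ps ! j"
        by (auto simp: in_set_conv_nth)
      ultimately show "x \<in> (\<Union>j<Suc (card F). {fst (p j)..snd (p j)})"
        using ps(1) by (auto simp: p_def)
    qed
    moreover have "(\<Sum>j<Suc (card F). seg_len (fst (p j)) (snd (p j))) = (\<Sum>q\<leftarrow>ps. seg_len (fst q) (snd q))"
      by (simp add: sum_list_sum_nth atLeast0LessThan ps(1) p_def)
    ultimately show ?thesis
      using ps(1,3) by (intro exI[of _ p]) (simp add: p_def seg_len_def)
  qed
  from choice[OF allI[OF this]] obtain P where "\<forall>k.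
    (\<forall>j\<ge>Suc (card F). seg_len (fst (P k j)) (snd (P k j)) = 0) \<and>
    (\<forall>j. seg_len (fst (P k j)) (snd (P k j)) \<le> seg_len (lo k) (hi k)) \<and>
    {lo k..hi k} - (\<Union>n\<in>F. {c n<..<d n}) \<subseteq> (\<Union>j<Suc (card F). {fst (P k j)..snd (P k j)}) \<and>
    (\<Sum>j<Suc (card F). seg_len (fst (P k j)) (snd (P k j)))
      = seg_len (lo k) (hi k) - (\<Sum>n\<in>F. overlap_len (lo k) (hi k) (c n) (d n))" ..
  then show thesis by (intro that) auto
qed

section \<open>Intervals, covers and outer measure\<close>

lemma lc_interval_bounds:
  assumes "lc_interval a b S" shows "a < b" "{a<..<b} \<subseteq> S" "S \<subseteq> {a..b}"
  using assms unfolding lc_interval_def by auto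

lemma lc_interval_atLeastAtMost: "a < b \<Longrightarrow> lc_interval a b {a..b}"
  by (simp add: lc_interval_def atLeastAtMost_def atLeast_def atMost_def Int_def)

lemma lc_interval_unique:
  assumes "lc_interval a b S" "lc_interval a' b' S" shows "a = a'" "b = b'"
proof -
  have lower: "a' \<le> a" and upper: "b \<le> b'"
    if "lc_interval a b S" "lc_interval a' b' S" for a b a' b'
  proof -
    note bounds = lc_interval_bounds[OF that(1)] lc_interval_bounds[OF that(2)]
    show "a' \<le> a"
    proof (rule ccontr)
      assume "\<not> a' \<le> a"
      then obtain x where "a < x" "x < min a' b" using bounds(1) dense by (metis min_less_iff_conj not_le)
      then show False using bounds by fastforce
    qed
    show "b \<le> b'"
    proof (rule ccontr)
      assume "\<not> b \<le> b'"
      then obtain x where "max a b' < x" "x < b" using bounds(1) dense by (metis max_less_iff_conj not_le)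
      then show False using bounds by fastforce
    qed
  qed
  show "a = a'" "b = b'"
    using lower[OF assms] lower[OF assms(2,1)] upper[OF assms] upper[OF assms(2,1)] by simp_all
qed

lemma lc_len_eq:
  assumes "lc_interval a b S" shows "lc_len S = b - a"
  unfolding lc_len_def
proof (rule the_equality)
  show "\<exists>a' b'. lc_interval a' b' S \<and> b - a = b' - a'" using assms by blast
next
  fix l assume "\<exists>a' b'. lc_interval a' b' S \<and> l = b' - a'"
  then obtain a' b' where "lc_interval a' b' S" "l = b' - a'" by blast
  then show "l = b - a" using lc_interval_unique[OF assms] by simp
qed

lemma lc_interval_seq_endpoints:
  assumes "\<And>n. is_lc_interval (S n)" obtains a b where "\<And>n. lc_interval (a n) (b n) (S n)"
proof -
  have "\<forall>n. \<exists>p. lc_interval (fst p) (snd p) (S n)"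
    using assms by (auto simp: is_lc_interval_def)
  then obtain p where "\<forall>n. lc_interval (fst (p n)) (snd (p n)) (S n)"
    by (rule choice[THEN exE])
  then show thesis by (intro that[of "\<lambda>n. fst (p n)" "\<lambda>n. snd (p n)"]) simp
qed

lemma lc_intervals_disjoint_order:
  assumes "lc_interval c d I" "lc_interval c' d' I'" "I \<inter> I' = {}"
  shows "d \<le> c' \<or> d' \<le> c"
proof (rule ccontr)
  assume "\<not> (d \<le> c' \<or> d' \<le> c)"
  then have "max c c' < min d d'"
    using lc_interval_bounds(1)[OF assms(1)] lc_interval_bounds(1)[OF assms(2)] by auto
  then obtain x where "max c c' < x" "x < min d d'" using dense by blast
  then have "x \<in> I" "x \<in> I'"
    using lc_interval_bounds(2)[OF assms(1)] lc_interval_bounds(2)[OF assms(2)] by auto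
  then show False using assms(3) by blast
qed

lemma cover_sums_iff:
  "s \<in> cover_sums X \<longleftrightarrow> (\<exists>S :: nat \<Rightarrow> lc set. (\<forall>n. is_lc_interval (S n)) \<and> X \<subseteq> (\<Union>n. S n) \<and>
      lc_summable (\<lambda>n. lc_len (S n)) \<and> s = lc_sum (\<lambda>n. lc_len (S n)))"
  (is "_ \<longleftrightarrow> (\<exists>S. ?cover S)")
proof
  assume "s \<in> cover_sums X"
  then obtain S where "lc_cover X S" "lc_sums (\<lambda>n. lc_len (S n)) s"
    by (auto simp: cover_sums_def)
  then have "?cover S" by (simp add: lc_cover_def lc_sums_iff)
  then show "\<exists>S. ?cover S" by blast
next
  assume "\<exists>S. ?cover S"
  then obtain S where "?cover S" ..
  then have "lc_cover X S" "lc_sums (\<lambda>n. lc_len (S n)) s"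
    by (auto simp: lc_cover_def lc_sums_iff)
  then show "s \<in> cover_sums X" by (auto simp: cover_sums_def)
qed

lemma Mu_eqI:
  assumes "lc_is_inf (cover_sums A) m" shows "Mu A = m"
  unfolding Mu_def
proof (rule the_equality)
  fix m' assume m': "lc_is_inf (cover_sums A) m'"
  show "m' = m"
  proof (rule order.antisym)
    show "m' \<le> m" using assms m' unfolding lc_is_inf_def by blast
    show "m \<le> m'" using assms m' unfolding lc_is_inf_def by blast
  qed
qed (rule assms)

lemma Mu_is_inf:
  assumes "outer_measurable A" shows "lc_is_inf (cover_sums A) (Mu A)"
proof -
  obtain m where "lc_is_inf (cover_sums A) m" using assms unfolding outer_measurable_def by blast
  then show ?thesis by (simp add: Mu_eqI)
qed

lemma Mu_le: "outer_measurable A \<Longrightarrow> s \<in> cover_sums A \<Longrightarrow> Mu A \<le> s"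
  using Mu_is_inf unfolding lc_is_inf_def by blast

lemma Mu_greatest: "outer_measurable A \<Longrightarrow> (\<And>s. s \<in> cover_sums A \<Longrightarrow> m \<le> s) \<Longrightarrow> m \<le> Mu A"
  using Mu_is_inf unfolding lc_is_inf_def by blast

lemma cover_sums_Un:
  assumes "sa \<in> cover_sums A" "sb \<in> cover_sums B" shows "sa + sb \<in> cover_sums (A \<union> B)"
proof -
  obtain SA :: "nat \<Rightarrow> lc set" where
    SA: "\<forall>n. is_lc_interval (SA n)" "A \<subseteq> (\<Union>n. SA n)" "lc_summable (\<lambda>n. lc_len (SA n))"
      "sa = lc_sum (\<lambda>n. lc_len (SA n))"
    using assms(1) unfolding cover_sums_iff by blast
  obtain SB :: "nat \<Rightarrow> lc set" where
    SB: "\<forall>n. is_lc_interval (SB n)" "B \<subseteq> (\<Union>n. SB n)" "lc_summable (\<lambda>n. lc_len (SB n))"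
      "sb = lc_sum (\<lambda>n. lc_len (SB n))"
    using assms(2) unfolding cover_sums_iff by blast
  define S where "S = case_sum SA SB \<circ> sum_decode"
  have len: "(\<lambda>n. lc_len (S n)) = case_sum (\<lambda>n. lc_len (SA n)) (\<lambda>n. lc_len (SB n)) \<circ> sum_decode"
    by (rule ext) (simp add: S_def split: sum.split)
  have summable: "lc_summable (case_sum (\<lambda>n. lc_len (SA n)) (\<lambda>n. lc_len (SB n)))"
    using SA(3) SB(3) by (rule lc_summable_case_sum)
  show ?thesis
    unfolding cover_sums_iff
  proof (intro exI[of _ S] conjI)
    show "\<forall>n. is_lc_interval (S n)"
    proof
      fix n show "is_lc_interval (S n)"
        using SA(1) SB(1) by (cases "sum_decode n") (simp_all add: S_def)
    qed
    show "A \<union> B \<subseteq> (\<Union>n. S n)"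
    proof
      fix x assume "x \<in> A \<union> B"
      then obtain t where "x \<in> case_sum SA SB t" using SA(2) SB(2) by (metis UN_iff Un_iff old.sum.simps(5,6) subsetD)
      then have "x \<in> S (sum_encode t)" by (simp add: S_def)
      then show "x \<in> (\<Union>n. S n)" by blast
    qed
    show "lc_summable (\<lambda>n. lc_len (S n))"
      unfolding len by (rule lc_summable_reindex[OF inj_sum_decode summable])
    show "sa + sb = lc_sum (\<lambda>n. lc_len (S n))"
      unfolding len lc_sum_reindex[OF bij_sum_decode summable]
      by (simp add: lc_sum_case_sum SA(3,4) SB(3,4))
  qed
qed

lemma lower_bound_cover_sums_Un_le:
  assumes "outer_measurable A" "outer_measurable B"
    and lower: "\<And>s. s \<in> cover_sums (A \<union> B) \<Longrightarrow> m \<le> s"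
  shows "m \<le> Mu A + Mu B"
proof -
  have "m - Mu A \<le> sb" if sb: "sb \<in> cover_sums B" for sb
  proof -
    have "m - sb \<le> sa" if "sa \<in> cover_sums A" for sa
      using lower[OF cover_sums_Un[OF that sb]] by (simp add: algebra_simps)
    then have "m - sb \<le> Mu A" by (rule Mu_greatest[OF assms(1)])
    then show ?thesis by (simp add: algebra_simps)
  qed
  then have "m - Mu A \<le> Mu B" by (rule Mu_greatest[OF assms(2)])
  then show ?thesis by (simp add: algebra_simps)
qed

lemma Mu_le_segment_sum:
  fixes lo hi :: "'i::countable \<Rightarrow> lc"
  assumes "outer_measurable X" "infinite (UNIV :: 'i set)"
    and "X \<subseteq> (\<Union>i. {lo i..hi i})" "lc_summable (\<lambda>i. seg_len (lo i) (hi i))"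
  shows "Mu X \<le> lc_sum (\<lambda>i. seg_len (lo i) (hi i))"
proof (rule le_epsilon_dense)
  fix \<epsilon> :: lc assume "0 < \<epsilon>"
  then obtain e :: "'i \<Rightarrow> lc" where e: "\<And>i. 0 < e i" "lc_summable e" "lc_sum e < \<epsilon>"
    using exists_small_positive_family by blast
  define g :: "nat \<Rightarrow> 'i" where "g = from_nat_into UNIV"
  have "bij g" using bij_betw_from_nat_into[OF countableI_type assms(2)] by (simp add: g_def)
  \<comment> \<open>widen each, possibly degenerate, segment to a proper interval at the cost \<open>e i\<close>\<close>
  define up where "up i = max (hi i) (lo i + e i)" for i
  define S where "S n = {lo (g n)..up (g n)}" for n
  define b where "b = (\<lambda>i. seg_len (lo i) (hi i) + e i)"
  have lo_up: "lo i < up i" for i using e(1)[of i] by (simp add: up_def less_max_iff_disj)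
  have S: "lc_interval (lo (g n)) (up (g n)) (S n)" for n
    unfolding S_def by (rule lc_interval_atLeastAtMost[OF lo_up])
  have len: "lc_len (S n) = up (g n) - lo (g n)" for n by (rule lc_len_eq[OF S])
  have len_le: "lc_len (S n) \<le> (b \<circ> g) n" for n
    using seg_len_pad[of "e (g n)" "hi (g n)" "lo (g n)"] e(1)[of "g n"]
    by (simp add: len up_def b_def less_imp_le)
  have b: "lc_summable b" using assms(4) e(2) by (simp add: b_def lc_summable_add)
  then have b_g: "lc_summable (b \<circ> g)" using \<open>bij g\<close> by (simp add: bij_is_inj lc_summable_reindex)
  have summable: "lc_summable (\<lambda>n. lc_len (S n))"
    using lc_summable_le[OF _ len_le b_g] lo_up by (simp add: len less_imp_le)
  have "X \<subseteq> (\<Union>n. S n)"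
  proof
    fix x assume "x \<in> X"
    then obtain i where "x \<in> {lo i..hi i}" using assms(3) by blast
    moreover obtain n where "i = g n" using \<open>bij g\<close> unfolding bij_def surj_def by blast
    ultimately have "x \<in> S n" by (simp add: S_def up_def le_max_iff_disj)
    then show "x \<in> (\<Union>n. S n)" by blast
  qed
  then have "lc_sum (\<lambda>n. lc_len (S n)) \<in> cover_sums X"
    unfolding cover_sums_iff using S summable
    by (intro exI[of _ S] conjI) (auto simp: is_lc_interval_def)
  then have "Mu X \<le> lc_sum (\<lambda>n. lc_len (S n))" by (rule Mu_le[OF assms(1)])
  also have "\<dots> \<le> lc_sum (b \<circ> g)" by (rule lc_sum_mono[OF summable b_g len_le])
  also have "\<dots> = lc_sum (\<lambda>i. seg_len (lo i) (hi i)) + lc_sum e"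
    using lc_sum_reindex[OF \<open>bij g\<close> b] lc_sum_add[OF assms(4) e(2)] by (simp add: b_def)
  also have "\<dots> \<le> lc_sum (\<lambda>i. seg_len (lo i) (hi i)) + \<epsilon>" using e(3) by simp
  finally show "Mu X \<le> lc_sum (\<lambda>i. seg_len (lo i) (hi i)) + \<epsilon>" .
qed

lemma Mu_le_cover_sum_minus_overlaps:
  fixes a b c d :: "nat \<Rightarrow> lc"
  assumes "outer_measurable B"
    and ab: "\<And>k. a k < b k" and B_cover: "B \<subseteq> (\<Union>k. {a k..b k})"
    and summable: "lc_summable (\<lambda>k. b k - a k)"
    and cd: "\<And>n. c n < d n" and disjoint: "\<And>n m. n \<noteq> m \<Longrightarrow> d n \<le> c m \<or> d m \<le> c n"
    and B_avoids: "\<And>n. B \<inter> {c n<..<d n} = {}"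
  shows "Mu B \<le> lc_sum (\<lambda>k. b k - a k)
    - lc_sum (\<lambda>i. if snd i < N then overlap_len (a (fst i)) (b (fst i)) (c (snd i)) (d (snd i)) else 0)"
proof -
  define ov where "ov = (\<lambda>i :: nat \<times> nat.
    if snd i < N then overlap_len (a (fst i)) (b (fst i)) (c (snd i)) (d (snd i)) else 0)"
  have seg_ab: "seg_len (a k) (b k) = b k - a k" for k using ab[of k] by (simp add: seg_len_eq)
  obtain P :: "nat \<Rightarrow> nat \<Rightarrow> lc \<times> lc" where
    P_outside: "\<And>k j. Suc N \<le> j \<Longrightarrow> seg_len (fst (P k j)) (snd (P k j)) = 0" and
    P_le: "\<And>k j. seg_len (fst (P k j)) (snd (P k j)) \<le> seg_len (a k) (b k)" and
    P_cover: "\<And>k. {a k..b k} - (\<Union>n<N. {c n<..<d n}) \<subseteq> (\<Union>j<Suc N. {fst (P k j)..snd (P k j)})" and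
    P_sum: "\<And>k. (\<Sum>j<Suc N. seg_len (fst (P k j)) (snd (P k j)))
      = seg_len (a k) (b k) - (\<Sum>n<N. overlap_len (a k) (b k) (c n) (d n))"
    using segments_minus_intervals_pieces[of "{..<N}" c d a b, unfolded card_lessThan] cd disjoint
    by blast
  define seg where "seg = (\<lambda>i. seg_len (fst (P (fst i) (snd i))) (snd (P (fst i) (snd i))))"
  have seg: "lc_summable seg" "lc_sum seg = lc_sum (\<lambda>k. \<Sum>j<Suc N. seg (k, j))"
    using lc_sum_bounded_rows(1,3)[OF summable, of seg "Suc N"] P_le P_outside
    by (simp_all add: seg_def seg_ab seg_len_nonneg)
  have ov_bounds: "0 \<le> ov (k, n)" "ov (k, n) \<le> b k - a k" "N \<le> n \<Longrightarrow> ov (k, n) = 0" for k n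
    using overlap_len_le_left[of "a k" "b k"] ab[of k]
    by (simp_all add: ov_def seg_ab overlap_len_nonneg less_imp_le)
  note ov = lc_sum_bounded_rows[of "\<lambda>k. b k - a k" ov N, OF summable ov_bounds]
  have "B \<subseteq> (\<Union>i. {fst (P (fst i) (snd i))..snd (P (fst i) (snd i))})"
  proof
    fix x assume "x \<in> B"
    then obtain k where "x \<in> {a k..b k} - (\<Union>n<N. {c n<..<d n})"
      using B_cover B_avoids by blast
    then obtain j where "x \<in> {fst (P k j)..snd (P k j)}" using P_cover by blast
    then show "x \<in> (\<Union>i. {fst (P (fst i) (snd i))..snd (P (fst i) (snd i))})" by force
  qed
  then have "Mu B \<le> lc_sum seg"
    using Mu_le_segment_sum[OF assms(1) _ _ seg(1)[unfolded seg_def]]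
    by (simp add: seg_def finite_prod)
  also have "lc_sum seg = lc_sum (\<lambda>k. \<Sum>j<Suc N. seg (k, j))" by (fact seg(2))
  also have "\<dots> = lc_sum (\<lambda>k. (b k - a k) - (\<Sum>n<N. ov (k, n)))"
    using P_sum by (simp add: seg_def seg_ab ov_def)
  also have "\<dots> = lc_sum (\<lambda>k. b k - a k) - lc_sum ov"
    using ov by (simp add: lc_sum_diff summable)
  finally show ?thesis by (simp add: ov_def)
qed

lemma lc_summable_overlaps:
  fixes a b c d :: "nat \<Rightarrow> lc"
  assumes "\<And>k. a k < b k" "\<And>n. c n < d n"
    and "lc_summable (\<lambda>k. b k - a k)" "lc_summable (\<lambda>n. d n - c n)"
  shows "lc_summable (\<lambda>i. overlap_len (a (fst i)) (b (fst i)) (c (snd i)) (d (snd i)))"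
proof (rule lc_summable_pairI[OF assms(3)])
  show "overlap_len (a (fst (k, n))) (b (fst (k, n))) (c (snd (k, n))) (d (snd (k, n))) \<le> b k - a k"
    for k n using overlap_len_le_left[of "a k" "b k"] assms(1)[of k] by (simp add: seg_len_eq)
  fix q
  have "{n. \<exists>k. \<not> vanishes_below (overlap_len (a k) (b k) (c n) (d n)) q}
      \<subseteq> {n. \<not> vanishes_below (d n - c n) q}"
    using vanishes_below_mono[OF overlap_len_nonneg overlap_len_le_right] assms(2)
    by (auto simp: seg_len_eq less_imp_le)
  then show "finite {n. \<exists>k. \<not> vanishes_below
      (overlap_len (a (fst (k, n))) (b (fst (k, n))) (c (snd (k, n))) (d (snd (k, n)))) q}"
    using assms(4) by (auto simp: lc_summable_def intro: finite_subset)
qed (simp add: overlap_len_nonneg)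

lemma Mu_le_overlap_sum:
  fixes a b c d :: "nat \<Rightarrow> lc"
  assumes "outer_measurable A" "A \<subseteq> (\<Union>k. {a k..b k})" "A \<subseteq> (\<Union>n. {c n..d n})"
    and "lc_summable (\<lambda>i. overlap_len (a (fst i)) (b (fst i)) (c (snd i)) (d (snd i)))"
  shows "Mu A \<le> lc_sum (\<lambda>i. overlap_len (a (fst i)) (b (fst i)) (c (snd i)) (d (snd i)))"
proof -
  have "A \<subseteq> (\<Union>i. {max (a (fst i)) (c (snd i))..min (b (fst i)) (d (snd i))})"
  proof
    fix x assume "x \<in> A"
    then obtain k n where "x \<in> {a k..b k}" "x \<in> {c n..d n}" using assms(2,3) by blast
    then have "x \<in> {max (a (fst (k, n))) (c (snd (k, n)))..min (b (fst (k, n))) (d (snd (k, n)))}"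
      by simp
    then show "x \<in> (\<Union>i. {max (a (fst i)) (c (snd i))..min (b (fst i)) (d (snd i))})" by blast
  qed
  moreover have "infinite (UNIV :: (nat \<times> nat) set)" by (simp add: finite_prod)
  ultimately show ?thesis
    using Mu_le_segment_sum[OF assms(1)] assms(4) by (simp add: overlap_len_def)
qed

lemma Mu_add_le_cover_sum:
  fixes I :: "nat \<Rightarrow> lc set"
  assumes I: "\<And>n. is_lc_interval (I n)" and disjoint: "\<And>m n. m \<noteq> n \<Longrightarrow> I m \<inter> I n = {}"
    and lengths: "lc_tendsto (\<lambda>n. lc_len (I n)) 0"
    and "outer_measurable A" "outer_measurable B"
    and A_inside: "A \<subseteq> (\<Union>n. I n)" and B_outside: "B \<subseteq> UNIV - (\<Union>n. I n)"
    and s: "s \<in> cover_sums (A \<union> B)"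
  shows "Mu A + Mu B \<le> s"
proof -
  obtain S :: "nat \<Rightarrow> lc set" where S: "\<forall>n. is_lc_interval (S n)" "A \<union> B \<subseteq> (\<Union>n. S n)"
    "lc_summable (\<lambda>n. lc_len (S n))" "s = lc_sum (\<lambda>n. lc_len (S n))"
    using s unfolding cover_sums_iff by blast
  obtain a b where ab: "\<And>k. lc_interval (a k) (b k) (S k)"
    using lc_interval_seq_endpoints[of S] S(1) by blast
  obtain c d where cd: "\<And>n. lc_interval (c n) (d n) (I n)"
    using lc_interval_seq_endpoints[of I] I by blast
  note ab_bounds = lc_interval_bounds[OF ab] and cd_bounds = lc_interval_bounds[OF cd]
  have s_eq: "s = lc_sum (\<lambda>k. b k - a k)" and S_summable: "lc_summable (\<lambda>k. b k - a k)"
    using S(3,4) by (simp_all add: lc_len_eq[OF ab])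
  have I_summable: "lc_summable (\<lambda>n. d n - c n)"
    using lengths by (simp add: lc_tendsto_iff lc_summable_nat_iff lc_len_eq[OF cd])
  define ov where "ov = (\<lambda>i :: nat \<times> nat. overlap_len (a (fst i)) (b (fst i)) (c (snd i)) (d (snd i)))"
  have ov_summable: "lc_summable ov"
    unfolding ov_def
    by (rule lc_summable_overlaps[where a = a and b = b and c = c and d = d,
          OF ab_bounds(1) cd_bounds(1) S_summable I_summable])
  have "A \<subseteq> (\<Union>k. {a k..b k})" using S(2) ab_bounds(3) by blast
  moreover have "A \<subseteq> (\<Union>n. {c n..d n})" using A_inside cd_bounds(3) by blast
  ultimately have Mu_A: "Mu A \<le> lc_sum ov"
    unfolding ov_def
    by (rule Mu_le_overlap_sum[where a = a and b = b and c = c and d = d,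
          OF assms(4) _ _ ov_summable[unfolded ov_def]])
  have "B \<subseteq> (\<Union>k. {a k..b k})" using S(2) ab_bounds(3) by blast
  moreover have "d n \<le> c m \<or> d m \<le> c n" if "n \<noteq> m" for n m
    using lc_intervals_disjoint_order[OF cd cd disjoint[OF that]] .
  moreover have "B \<inter> {c n<..<d n} = {}" for n using B_outside cd_bounds(2) by blast
  ultimately have Mu_B: "Mu B \<le> s - lc_sum (\<lambda>i. if snd i < N then ov i else 0)" for N
    unfolding s_eq ov_def
    by (rule Mu_le_cover_sum_minus_overlaps[where a = a and b = b and c = c and d = d,
          OF assms(5) ab_bounds(1) _ S_summable cd_bounds(1)])
  show ?thesis
  proof (rule le_of_le_add_limit_gap[OF lc_sum_truncations_tendsto[OF ov_summable, of snd]])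
    show "Mu A + Mu B \<le> s + (lc_sum ov - lc_sum (\<lambda>i. if snd i < N then ov i else 0))" for N
      using add_mono[OF Mu_A Mu_B[of N]] by (simp add: algebra_simps)
  qed
qed

theorem proposition3p4:
  fixes I :: "nat \<Rightarrow> lc set" and A B :: "lc set"
  assumes "\<And>n. is_lc_interval (I n)"
    and "\<And>m n. m \<noteq> n \<Longrightarrow> I m \<inter> I n = {}"
    and "lc_tendsto (\<lambda>n. lc_len (I n)) 0"
    and "outer_measurable A" and "outer_measurable B"
    and "A \<subseteq> (\<Union>n. I n)" and "B \<subseteq> UNIV - (\<Union>n. I n)"
  shows "outer_measurable (A \<union> B) \<and> Mu (A \<union> B) = Mu A + Mu B"
proof -
  have "lc_is_inf (cover_sums (A \<union> B)) (Mu A + Mu B)"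
    unfolding lc_is_inf_def
  proof (intro conjI ballI allI impI)
    show "Mu A + Mu B \<le> s" if "s \<in> cover_sums (A \<union> B)" for s
      using Mu_add_le_cover_sum[OF assms that] .
    show "m \<le> Mu A + Mu B" if "\<forall>s\<in>cover_sums (A \<union> B). m \<le> s" for m
      using that by (intro lower_bound_cover_sums_Un_le[OF assms(4,5)]) blast
  qed
  then show ?thesis
    using Mu_eqI by (auto simp: outer_measurable_def)
qed

end
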